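(* Let $k\ge 2$ and let $\lambda$ be an integer partition of length $k$ whose parts are not all equal. Then $|\lambda^{\perp B}|$ is at most the sum of the four largest of the binomial coefficients $\binom{k-2}{0},\binom{k-2}{1},\dots,\binom{k-2}{k-2}$ (the sum of all of them if there are fewer than four). Consequently: (a) if $k\ge 2$ is even, then $|(1^k)^{\perp B}|>|\mu^{\perp B}|$ for every partition $\mu$ of length $k$ whose parts are not all equal; (b) if $k\ge 5$ is odd, then $|(2,1^{k-1})^{\perp B}|\ge|\mu^{\perp B}|$ for every partition $\mu$ of length $k$.
   Context: An integer partition is $\lambda=(\lambda_1,\dots,\lambda_k)$ with integers $\lambda_1\ge\dots\ge\lambda_k\ge 1$; $k$ is its length. $1^k$ denotes the partition with $k$ parts equal to $1$, and $(2,1^{k-1})$ the partition with one part $2$ and $k-1$ parts $1$. For a partition $\lambda$, $\lambda^{\perp B}=\{x\in\{-1,1\}^k:\lambda_1x_1+\dots+\lambda_kx_k=0\}$. *)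

theory Defs
  imports Main
begin

definition is_partition :: "nat list \<Rightarrow> bool" where
  "is_partition l \<longleftrightarrow> sorted (rev l) \<and> (\<forall>x\<in>set l. 1 \<le> x)"

definition all_parts_equal :: "nat list \<Rightarrow> bool" where
  "all_parts_equal l \<longleftrightarrow> (\<forall>x\<in>set l. \<forall>y\<in>set l. x = y)"

definition perpB :: "nat list \<Rightarrow> int list set" where
  "perpB l = {x. length x = length l \<and> set x \<subseteq> {-1, 1} \<and>
                 (\<Sum>i<length l. int (l ! i) * x ! i) = 0}"

definition top4_binom_sum :: "nat \<Rightarrow> nat" where
  "top4_binom_sum k =
     sum_list (take 4 (rev (sort (map (\<lambda>j. (k - 2) choose j) [0..<k - 1]))))"

end

theory Submission
  imports Defs "HOL.Binomial_Plus" "HOL-Combinatorics.List_Permutation"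
begin

(* For a list a of positive integers and a finite set V of integers, let
   hits a V count the sign vectors y in {-1,1}^n (n = length a) with a.y in V.  Fixing
   the first sign gives hits (c # a) V = hits a (V - c) + hits a (V + c).  Combined
   with the concavity of the central binomial sums
     central_sum n s = sum of the s central binomial coefficients (n choose j),
   this recursion proves Erdos' form of the Littlewood-Offord inequality
     hits a V <= central_sum (length a) (card V).
   For a partition l of length k with largest part a different from its smallest part b,
   fixing the signs of a and b shows that |l^perpB| counts the sign vectors of the
   remaining k - 2 parts that hit one of the four distinct targets +-a+-b, whence
   |l^perpB| <= central_sum (k-2) 4, and this is at most the sum of the four largest
   binomial coefficients of k - 2.  Parts (a) and (b) follow by comparing
   central_sum (k-2) 4 with the exact values of |(1^k)^perpB| and |(2,1^(k-1))^perpB|,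
   which are binomial coefficients computed with Pascal's rule. *)

fun dot :: "int list \<Rightarrow> int list \<Rightarrow> int" where
  "dot (a # as) (y # ys) = a * y + dot as ys"
| "dot _ _ = 0"

definition sign_vectors :: "nat \<Rightarrow> int list set" where
  "sign_vectors n = {y. length y = n \<and> set y \<subseteq> {-1, 1}}"

definition hits :: "int list \<Rightarrow> int set \<Rightarrow> nat" where
  "hits a V = card {y \<in> sign_vectors (length a). dot a y \<in> V}"

lemma finite_sign_vectors: "finite (sign_vectors n)"
proof -
  have "sign_vectors n \<subseteq> {xs. set xs \<subseteq> {-1, 1::int} \<and> length xs = n}"
    by (auto simp: sign_vectors_def)
  then show ?thesis
    by (rule finite_subset) (rule finite_lists_length_eq, simp)
qed

lemma hits_Nil: "hits [] V = (if 0 \<in> V then 1 else 0)"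
proof -
  have "sign_vectors 0 = {[]}" by (auto simp: sign_vectors_def)
  then show ?thesis by (auto simp: hits_def)
qed

lemma hits_empty: "hits a {} = 0"
  by (simp add: hits_def)

(* Fixing the first sign: y = 1 # ys needs a.ys in V - c, y = -1 # ys needs a.ys in V + c. *)
lemma hits_Cons: "hits (c # a) V = hits a ((\<lambda>v. v - c) ` V) + hits a ((\<lambda>v. v + c) ` V)"
proof -
  let ?A = "{y \<in> sign_vectors (length a). dot a y \<in> (\<lambda>v. v - c) ` V}"
  let ?B = "{y \<in> sign_vectors (length a). dot a y \<in> (\<lambda>v. v + c) ` V}"
  have shift_minus: "c + dot a y \<in> V \<longleftrightarrow> dot a y \<in> (\<lambda>v. v - c) ` V" for y
    by (auto simp: image_def) (metis add.commute add_diff_cancel_right')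
  have shift_plus: "dot a y - c \<in> V \<longleftrightarrow> dot a y \<in> (\<lambda>v. v + c) ` V" for y
    by (auto simp: image_def) (metis diff_add_cancel)
  have split: "{y \<in> sign_vectors (length (c # a)). dot (c # a) y \<in> V}
      = Cons 1 ` ?A \<union> Cons (-1) ` ?B"
  proof (intro set_eqI)
    fix y
    show "y \<in> {y \<in> sign_vectors (length (c # a)). dot (c # a) y \<in> V}
        \<longleftrightarrow> y \<in> Cons 1 ` ?A \<union> Cons (-1) ` ?B"
    proof (cases y)
      case Nil
      then show ?thesis by (auto simp: sign_vectors_def)
    next
      case (Cons h ys)
      then show ?thesis
        using shift_minus[of ys] shift_plus[of ys] by (auto simp: sign_vectors_def)
    qed
  qed
  have "card (Cons 1 ` ?A \<union> Cons (-1) ` ?B) = card (Cons 1 ` ?A) + card (Cons (-1) ` ?B)"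
    by (rule card_Un_disjoint) (use finite_sign_vectors in auto)
  also have "\<dots> = card ?A + card ?B" by (simp add: card_image)
  finally show ?thesis unfolding hits_def split .
qed

lemma hits_Un_Int: "hits a W1 + hits a W2 = hits a (W1 \<union> W2) + hits a (W1 \<inter> W2)"
proof -
  let ?A = "{y \<in> sign_vectors (length a). dot a y \<in> W1}"
  let ?B = "{y \<in> sign_vectors (length a). dot a y \<in> W2}"
  have "card ?A + card ?B = card (?A \<union> ?B) + card (?A \<inter> ?B)"
    by (rule card_Un_Int) (use finite_sign_vectors in auto)
  moreover have "?A \<union> ?B = {y \<in> sign_vectors (length a). dot a y \<in> W1 \<union> W2}" by auto
  moreover have "?A \<inter> ?B = {y \<in> sign_vectors (length a). dot a y \<in> W1 \<inter> W2}" by auto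
  ultimately show ?thesis unfolding hits_def by simp
qed

lemma hits_insert: "v \<notin> W \<Longrightarrow> hits a (insert v W) = hits a {v} + hits a W"
  using hits_Un_Int[of a "{v}" W] by (simp add: hits_empty)

(* The counting function does not depend on the order of the weights; we need that the
   last weight can be brought to the front. *)
lemma hits_swap: "hits (c # b # m) V = hits (b # c # m) V"
proof -
  have commute: "(\<lambda>v. v + p) ` ((\<lambda>v. v + q) ` V) = (\<lambda>v. v + q) ` ((\<lambda>v. v + p) ` V)"
    for p q :: int
    by (simp add: image_image add.assoc add.commute[of p q])
  have "hits (c # b # m) V =
      hits m ((\<lambda>v. v + (-b)) ` ((\<lambda>v. v + (-c)) ` V)) + hits m ((\<lambda>v. v + b) ` ((\<lambda>v. v + (-c)) ` V))
    + (hits m ((\<lambda>v. v + (-b)) ` ((\<lambda>v. v + c) ` V)) + hits m ((\<lambda>v. v + b) ` ((\<lambda>v. v + c) ` V)))"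
    by (simp add: hits_Cons)
  also have "\<dots> =
      hits m ((\<lambda>v. v + (-c)) ` ((\<lambda>v. v + (-b)) ` V)) + hits m ((\<lambda>v. v + c) ` ((\<lambda>v. v + (-b)) ` V))
    + (hits m ((\<lambda>v. v + (-c)) ` ((\<lambda>v. v + b) ` V)) + hits m ((\<lambda>v. v + c) ` ((\<lambda>v. v + b) ` V)))"
    by (simp only: commute)
  also have "\<dots> = hits (b # c # m) V" by (simp add: hits_Cons)
  finally show ?thesis .
qed

lemma hits_snoc: "hits (m @ [b]) V = hits (b # m) V"
proof (induction m arbitrary: V)
  case Nil
  then show ?case by simp
next
  case (Cons c m)
  have "hits ((c # m) @ [b]) V = hits (c # b # m) V" by (simp add: hits_Cons Cons.IH)
  also have "\<dots> = hits (b # c # m) V" by (rule hits_swap)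
  finally show ?case .
qed

lemma sum_nth_eq_dot:
  "length x = length l \<Longrightarrow> (\<Sum>i<length l. int (l ! i) * x ! i) = dot (map int l) x"
proof (induction l arbitrary: x)
  case Nil
  then show ?case by simp
next
  case (Cons h l)
  then obtain z zs where x: "x = z # zs" by (cases x) auto
  have "(\<Sum>i<length (h # l). int ((h # l) ! i) * x ! i) = int h * z + (\<Sum>i<length l. int (l ! i) * zs ! i)"
    unfolding x length_Cons sum.lessThan_Suc_shift by simp
  then show ?case using Cons x by simp
qed

lemma card_perpB: "card (perpB l) = hits (map int l) {0}"
proof -
  have "perpB l = {y \<in> sign_vectors (length (map int l)). dot (map int l) y \<in> {0}}"
    by (auto simp: perpB_def sign_vectors_def sum_nth_eq_dot)
  then show ?thesis by (simp add: hits_def)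
qed

(* central_sum n s is the sum of (n choose j) over the s indices j with -s < 2j - n <= s,
   i.e. the sum of the s largest binomial coefficients of n. *)
definition central_sum :: "nat \<Rightarrow> nat \<Rightarrow> nat" where
  "central_sum n s = (\<Sum>j\<le>n. if n < 2 * j + s \<and> 2 * j \<le> n + s then n choose j else 0)"

lemma central_sum_0: "central_sum 0 s = (if 0 < s then 1 else 0)"
  by (simp add: central_sum_def)

lemma central_sum_empty: "central_sum n 0 = 0"
  by (simp add: central_sum_def)

lemma central_sum_as_set:
  "central_sum n s = (\<Sum>j \<in> {j. n < 2 * j + s \<and> 2 * j \<le> n + s}. n choose j)"
proof -
  have "central_sum n s = (\<Sum>j \<in> {j \<in> {..n}. n < 2 * j + s \<and> 2 * j \<le> n + s}. n choose j)"
    unfolding central_sum_def by (rule sum.inter_filter[symmetric]) simp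
  also have "\<dots> = (\<Sum>j \<in> {j. n < 2 * j + s \<and> 2 * j \<le> n + s}. n choose j)"
  proof (rule sum.mono_neutral_left)
    show "finite {j. n < 2 * j + s \<and> 2 * j \<le> n + s}"
      by (rule finite_subset[of _ "{..n + s}"]) auto
  qed auto
  finally show ?thesis .
qed

lemma pascal_sum:
  fixes w :: "nat \<Rightarrow> nat"
  shows "(\<Sum>j\<le>Suc n. w j * (Suc n choose j)) = (\<Sum>i\<le>n. (w i + w (Suc i)) * (n choose i))"
proof -
  have split: "(\<Sum>j\<le>Suc n. w j * (Suc n choose j))
      = w 0 + (\<Sum>i\<le>n. w (Suc i) * (n choose i)) + (\<Sum>i\<le>n. w (Suc i) * (n choose Suc i))"
    by (subst sum.atMost_Suc_shift) (simp add: algebra_simps sum.distrib)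
  have shift: "w 0 + (\<Sum>i\<le>n. w (Suc i) * (n choose Suc i)) = (\<Sum>i\<le>n. w i * (n choose i))"
    using sum.atMost_Suc_shift[of "\<lambda>i. w i * (n choose i)" n] by (simp add: binomial_eq_0)
  show ?thesis using split shift by (simp add: algebra_simps sum.distrib)
qed

(* The recursion matching hits_Cons: a window of size s for n + 1 splits into
   windows of sizes s + 1 and s - 1 for n. *)
lemma central_sum_Suc:
  assumes "1 \<le> s"
  shows "central_sum (Suc n) s = central_sum n (s + 1) + central_sum n (s - 1)"
proof -
  define w where "w = (\<lambda>j. if Suc n < 2 * j + s \<and> 2 * j \<le> Suc n + s then 1 else (0::nat))"
  have "central_sum (Suc n) s = (\<Sum>j\<le>Suc n. w j * (Suc n choose j))"
    unfolding central_sum_def w_def by (intro sum.cong) auto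
  also have "\<dots> = (\<Sum>i\<le>n. (w i + w (Suc i)) * (n choose i))" by (rule pascal_sum)
  also have "\<dots> = (\<Sum>i\<le>n. (if n < 2 * i + (s + 1) \<and> 2 * i \<le> n + (s + 1) then n choose i else 0)
      + (if n < 2 * i + (s - 1) \<and> 2 * i \<le> n + (s - 1) then n choose i else 0))"
    by (intro sum.cong) (use assms in \<open>auto simp: w_def\<close>)
  also have "\<dots> = central_sum n (s + 1) + central_sum n (s - 1)"
    by (simp add: central_sum_def sum.distrib)
  finally show ?thesis .
qed

lemma central_sum_concave:
  "central_sum n (s + 2) + central_sum n s \<le> 2 * central_sum n (s + 1)"
proof (induction n arbitrary: s)
  case 0
  then show ?case by (simp add: central_sum_0)
next
  case (Suc n)
  show ?case
  proof (cases s)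
    case 0
    have "central_sum (Suc n) 2 = central_sum n 3 + central_sum n 1"
      using central_sum_Suc[of 2 n] by simp
    moreover have "central_sum (Suc n) 1 = central_sum n 2"
      using central_sum_Suc[of 1 n] by (simp add: central_sum_empty numeral_2_eq_2)
    moreover have "central_sum n 3 + central_sum n 1 \<le> 2 * central_sum n 2"
      using Suc.IH[of 1] by (simp add: numeral_3_eq_3 numeral_2_eq_2)
    ultimately show ?thesis
      using 0 by (simp add: central_sum_empty numeral_2_eq_2)
  next
    case (Suc r)
    have "central_sum (Suc n) (s + 2) = central_sum n (r + 4) + central_sum n (r + 2)"
         "central_sum (Suc n) s = central_sum n (r + 2) + central_sum n r"
         "central_sum (Suc n) (s + 1) = central_sum n (r + 3) + central_sum n (r + 1)"
      using central_sum_Suc[of "s + 2" n] central_sum_Suc[of s n] central_sum_Suc[of "s + 1" n] Suc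
      by (simp_all add: eval_nat_numeral)
    moreover have "central_sum n (r + 4) + central_sum n (r + 2) \<le> 2 * central_sum n (r + 3)"
      using Suc.IH[of "r + 2"] by (simp add: eval_nat_numeral)
    moreover have "central_sum n (r + 2) + central_sum n r \<le> 2 * central_sum n (r + 1)"
      using Suc.IH[of r] by simp
    ultimately show ?thesis by simp
  qed
qed

(* Consequence of concavity: replacing the pair of window sizes (t - 1, t + 1) by the more
   spread pair (t - d, t + d) cannot increase the total. *)
lemma central_sum_spread:
  assumes "1 \<le> d" "d \<le> t"
  shows "central_sum n (t + d) + central_sum n (t - d) \<le> central_sum n (t + 1) + central_sum n (t - 1)"
  using assms
proof (induction d rule: dec_induct)
  case base
  then show ?case by simp
next
  case (step d)
  have increments: "central_sum n (Suc b) + central_sum n a \<le> central_sum n (Suc a) + central_sum n b"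
    if "a \<le> b" for a b
    using that
  proof (induction b rule: dec_induct)
    case (step b)
    then show ?case using central_sum_concave[of n b] by simp
  qed simp
  have "central_sum n (Suc (t + d)) + central_sum n (t - Suc d)
      \<le> central_sum n (Suc (t - Suc d)) + central_sum n (t + d)"
    by (rule increments) simp
  moreover have "Suc (t - Suc d) = t - d" using step by simp
  ultimately show ?case using step by simp
qed

(* Shifting a finite nonempty set V by -c and by +c (c > 0) gives two copies of size t = |V|
   whose union has size t + d and intersection size t - d for some 1 <= d <= t: the maximum
   of V shifted up is never in the copy shifted down. *)
lemma shifted_copies:
  fixes V :: "int set"
  assumes "finite V" "V \<noteq> {}" "c > 0"
  defines "W1 \<equiv> (\<lambda>v. v - c) ` V" and "W2 \<equiv> (\<lambda>v. v + c) ` V"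
  shows "\<exists>d. 1 \<le> d \<and> d \<le> card V \<and> card (W1 \<union> W2) = card V + d \<and> card (W1 \<inter> W2) = card V - d"
proof -
  have fin: "finite W1" "finite W2" using assms(1) by (auto simp: W1_def W2_def)
  have card_W: "card W1 = card V" "card W2 = card V"
    unfolding W1_def W2_def by (auto intro!: card_image inj_onI)
  have "Max V + c \<in> W2" using assms(1,2) by (auto simp: W2_def)
  moreover have "Max V + c \<notin> W1"
  proof
    assume "Max V + c \<in> W1"
    then obtain v where "v \<in> V" "Max V + c = v - c" by (auto simp: W1_def)
    moreover have "v \<le> Max V" using \<open>v \<in> V\<close> assms(1) by simp
    ultimately show False using assms(3) by simp
  qed
  ultimately have "W1 \<subset> W1 \<union> W2" by blast
  then have "card V < card (W1 \<union> W2)"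
    using card_W fin by (metis psubset_card_mono finite_Un)
  moreover have "card (W1 \<union> W2) + card (W1 \<inter> W2) = 2 * card V"
    using card_Un_Int[OF fin] card_W by simp
  ultimately show ?thesis
    by (intro exI[of _ "card (W1 \<union> W2) - card V"]) auto
qed

theorem littlewood_offord:
  assumes "\<forall>x \<in> set a. x > 0" "finite V"
  shows "hits a V \<le> central_sum (length a) (card V)"
  using assms
proof (induction a arbitrary: V)
  case Nil
  then show ?case by (auto simp: hits_Nil central_sum_0 card_gt_0_iff)
next
  case (Cons c a)
  show ?case
  proof (cases "V = {}")
    case True
    then show ?thesis by (simp add: hits_empty)
  next
    case False
    define t where "t = card V"
    define W1 where "W1 = (\<lambda>v. v - c) ` V"
    define W2 where "W2 = (\<lambda>v. v + c) ` V"
    obtain d where d: "1 \<le> d" "d \<le> t" "card (W1 \<union> W2) = t + d" "card (W1 \<inter> W2) = t - d"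
      using shifted_copies[of V c] Cons.prems False unfolding W1_def W2_def t_def by auto
    have "finite W1" "finite W2" using Cons.prems by (auto simp: W1_def W2_def)
    have "hits (c # a) V = hits a W1 + hits a W2" by (simp add: hits_Cons W1_def W2_def)
    also have "\<dots> = hits a (W1 \<union> W2) + hits a (W1 \<inter> W2)" by (rule hits_Un_Int)
    also have "\<dots> \<le> central_sum (length a) (t + d) + central_sum (length a) (t - d)"
      using Cons.IH[of "W1 \<union> W2"] Cons.IH[of "W1 \<inter> W2"] Cons.prems d
        \<open>finite W1\<close> \<open>finite W2\<close> by (auto intro!: add_mono)
    also have "\<dots> \<le> central_sum (length a) (t + 1) + central_sum (length a) (t - 1)"
      by (rule central_sum_spread) (use d in auto)
    also have "\<dots> = central_sum (length (c # a)) t"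
      using central_sum_Suc[of t "length a"] d by simp
    finally show ?thesis by (simp add: t_def)
  qed
qed

(* Two distinct positive weights a, b leave four distinct targets -a-b, -a+b, a-b, a+b
   for the remaining weights. *)
lemma hits_zero_two_distinct:
  assumes "a > 0" "b > 0" "a \<noteq> b" "\<forall>x \<in> set m. x > 0"
  shows "hits (a # b # m) {0} \<le> central_sum (length m) 4"
proof -
  have distinct: "-a-b \<notin> {-a+b, a-b, a+b}" "-a+b \<notin> {a-b, a+b}" "a-b \<notin> {a+b}"
    using assms by auto
  have step: "hits (b # m) {v} = hits m {v - b} + hits m {v + b}" for v
    by (simp add: hits_Cons)
  have "hits (a # b # m) {0} = hits m {-a-b} + (hits m {-a+b} + (hits m {a-b} + hits m {a+b}))"
    using step[of "-a"] step[of a] by (simp add: hits_Cons)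
  also have "\<dots> = hits m {-a-b, -a+b, a-b, a+b}"
    by (simp only: hits_insert[OF distinct(1)] hits_insert[OF distinct(2)] hits_insert[OF distinct(3)])
  also have "\<dots> \<le> central_sum (length m) (card {-a-b, -a+b, a-b, a+b})"
    by (rule littlewood_offord) (use assms in auto)
  also have "card {-a-b, -a+b, a-b, a+b} = 4" using distinct by simp
  finally show ?thesis .
qed

lemma perpB_le_central_sum:
  assumes "is_partition l" "length l = k" "2 \<le> k" "\<not> all_parts_equal l"
  shows "card (perpB l) \<le> central_sum (k - 2) 4"
proof -
  obtain a r where l_Cons: "l = a # r" using assms(2,3) by (cases l) auto
  with assms(2,3) have "r \<noteq> []" by auto
  with l_Cons obtain m b where l: "l = a # m @ [b]" by (metis append_butlast_last_id)
  have "sorted (b # rev m @ [a])" using assms(1) l by (simp add: is_partition_def)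
  then have bounds: "\<forall>x \<in> set l. b \<le> x \<and> x \<le> a" unfolding l by (auto simp: sorted_append)
  have "a \<noteq> b"
  proof
    assume "a = b"
    then have "\<forall>x \<in> set l. x = a" using bounds by (metis antisym)
    then show False using assms(4) unfolding all_parts_equal_def by metis
  qed
  have pos: "\<forall>x \<in> set l. 1 \<le> x" using assms(1) by (simp add: is_partition_def)
  have "card (perpB l) = hits (int a # map int m @ [int b]) {0}" by (simp add: card_perpB l)
  also have "\<dots> = hits (int a # int b # map int m) {0}" by (simp add: hits_Cons hits_snoc)
  also have "\<dots> \<le> central_sum (length (map int m)) 4"
    by (rule hits_zero_two_distinct) (use pos \<open>a \<noteq> b\<close> in \<open>auto simp: l\<close>)
  also have "length (map int m) = k - 2" using assms(2) l by simp
  finally show ?thesis .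
qed

lemma sum_le_card_mult_bound:
  fixes g :: "nat \<Rightarrow> nat"
  assumes "finite A" "finite B" "card A \<le> card B" "\<forall>a \<in> A. \<forall>b \<in> B. g a \<le> g b"
  shows "sum g A \<le> sum g B"
proof (cases "A = {}")
  case True
  then show ?thesis by simp
next
  case False
  define K where "K = Max (g ` A)"
  have K: "K \<in> g ` A" using False assms(1) by (simp add: K_def)
  have "sum g A \<le> card A * K" using sum_bounded_above[of A g K] assms(1) by (simp add: K_def)
  also have "\<dots> \<le> card B * K" using assms(3) by simp
  also have "\<dots> \<le> sum g B" using sum_bounded_below[of B K g] K assms(4) by auto
  finally show ?thesis .
qed

lemma sum_nth_le_prefix:
  fixes ys :: "nat list"
  assumes desc: "\<forall>i j. i \<le> j \<longrightarrow> j < length ys \<longrightarrow> ys ! j \<le> ys ! i"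
    and S: "S \<subseteq> {..<length ys}" and card_S: "card S \<le> m"
  shows "sum ((!) ys) S \<le> sum_list (take m ys)"
proof -
  define L where "L = {..<min m (length ys)}"
  have fin: "finite S" "finite L" using S finite_subset by (auto simp: L_def)
  have prefix: "sum_list (take m ys) = sum ((!) ys) L"
    unfolding sum_list_sum_nth L_def by (intro sum.cong) auto
  have "sum ((!) ys) (S - L) \<le> sum ((!) ys) (L - S)"
  proof (cases "S - L = {}")
    case True
    then show ?thesis by (metis sum.empty zero_le)
  next
    case False
    then obtain i where "i \<in> S" "i \<notin> L" by blast
    then have full: "min m (length ys) = m" using S by (auto simp: L_def)
    have "card (S - L) \<le> card (L - S)"
      using fin card_S full card_mono[OF fin(1), of "S \<inter> L"]
      by (simp add: card_Diff_subset_Int L_def Int_commute)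
    moreover have "\<forall>a \<in> S - L. \<forall>b \<in> L - S. ys ! a \<le> ys ! b"
      using desc S full by (auto simp: L_def)
    ultimately show ?thesis by (intro sum_le_card_mult_bound) (use fin in auto)
  qed
  then show ?thesis
    using sum.Int_Diff[OF fin(1), of "(!) ys" L] sum.Int_Diff[OF fin(2), of "(!) ys" S] prefix
    by (simp add: Int_commute)
qed

lemma sum_nth_le_largest:
  fixes xs :: "nat list"
  assumes S: "S \<subseteq> {..<length xs}" and card_S: "card S \<le> m"
  shows "sum ((!) xs) S \<le> sum_list (take m (rev (sort xs)))"
proof -
  define ys where "ys = rev (sort xs)"
  have "mset xs = mset ys" by (simp add: ys_def)
  then obtain \<phi> where \<phi>: "bij_betw \<phi> {..<length xs} {..<length ys}" "\<forall>i<length xs. xs ! i = ys ! (\<phi> i)"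
    using permutation_Ex_bij by blast
  have inj: "inj_on \<phi> S" using \<phi>(1) S bij_betw_imp_inj_on inj_on_subset by blast
  have "sum ((!) xs) S = sum ((!) ys) (\<phi> ` S)"
    by (subst sum.reindex[OF inj]) (use \<phi>(2) S in \<open>auto intro!: sum.cong\<close>)
  also have "\<dots> \<le> sum_list (take m ys)"
  proof (rule sum_nth_le_prefix)
    have "sorted (sort xs)" by simp
    then show "\<forall>i j. i \<le> j \<longrightarrow> j < length ys \<longrightarrow> ys ! j \<le> ys ! i"
      by (auto simp: ys_def rev_nth intro!: sorted_nth_mono)
    show "\<phi> ` S \<subseteq> {..<length ys}" using \<phi>(1) S bij_betw_imp_surj_on by blast
    show "card (\<phi> ` S) \<le> m" using card_S card_image[OF inj] by simp
  qed
  finally show ?thesis by (simp add: ys_def)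
qed

(* The window of size 4 contains at most four binomial coefficients of n. *)
lemma central_sum_4_le_top4: "central_sum n 4 \<le> top4_binom_sum (n + 2)"
proof -
  define T where "T = {j. n < 2 * j + 4 \<and> 2 * j \<le> n + 4} \<inter> {..n}"
  define xs where "xs = map (\<lambda>j. n choose j) [0..<n + 1]"
  have "central_sum n 4 = (\<Sum>j \<in> {j. n < 2 * j + 4 \<and> 2 * j \<le> n + 4}. n choose j)"
    by (rule central_sum_as_set)
  also have "\<dots> = sum (\<lambda>j. n choose j) T"
    unfolding T_def by (rule sum.mono_neutral_right)
      (auto intro: finite_subset[of _ "{..n + 4}"])
  also have "\<dots> = sum ((!) xs) T"
    by (intro sum.cong) (auto simp: T_def xs_def nth_append simp del: upt_Suc)
  also have "\<dots> \<le> sum_list (take 4 (rev (sort xs)))"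
  proof (rule sum_nth_le_largest)
    show "T \<subseteq> {..<length xs}" by (auto simp: T_def xs_def)
    have "T \<subseteq> {(n - 2) div 2..<(n - 2) div 2 + 4}" unfolding T_def by auto
    then show "card T \<le> 4" using card_mono[of "{(n - 2) div 2..<(n - 2) div 2 + 4}" T] by simp
  qed
  finally show ?thesis by (simp add: top4_binom_sum_def xs_def)
qed

lemma central_sum_4_explicit:
  assumes "1 \<le> t" "n = 2 * t \<or> n = 2 * t + 1"
  shows "central_sum n 4 = (n choose (t - 1)) + (n choose t) + (n choose (t + 1)) + (n choose (t + 2))"
proof -
  have "{j. n < 2 * j + 4 \<and> 2 * j \<le> n + 4} = {t - 1, t, t + 1, t + 2}" using assms by auto
  then have "central_sum n 4 = sum (\<lambda>j. n choose j) {t - 1, t, t + 1, t + 2}"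
    by (simp only: central_sum_as_set)
  also have "\<dots> = (n choose (t - 1)) + (n choose t) + (n choose (t + 1)) + (n choose (t + 2))"
    using assms(1) by (cases t) (simp_all add: add.assoc)
  finally show ?thesis .
qed

lemma dot_replicate: "dot (replicate n c) y = c * dot (replicate n 1) y"
proof (induction n arbitrary: y)
  case (Suc n)
  then show ?case by (cases y) (simp_all add: distrib_left)
qed simp

lemma dot_ones_form: "y \<in> sign_vectors n \<Longrightarrow> \<exists>p \<le> n. dot (replicate n 1) y = 2 * int p - int n"
proof (induction n arbitrary: y)
  case 0
  then show ?case by simp
next
  case (Suc n)
  then obtain h ys where y: "y = h # ys" "h \<in> {-1, 1}" "ys \<in> sign_vectors n"
    by (auto simp: sign_vectors_def length_Suc_conv)
  obtain p where p: "p \<le> n" "dot (replicate n 1) ys = 2 * int p - int n"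
    using Suc.IH y(3) by blast
  show ?case
  proof (cases "h = 1")
    case True
    then show ?thesis using y p by (intro exI[of _ "Suc p"]) simp
  next
    case False
    then have "h = -1" using y(2) by simp
    then show ?thesis using y p by (intro exI[of _ p]) simp
  qed
qed

lemma hits_ones: "hits (replicate n 1) {2 * int p - int n} = n choose p"
proof (induction n arbitrary: p)
  case 0
  show ?case by (cases p) (simp_all add: hits_Nil)
next
  case (Suc n)
  have step: "hits (replicate (Suc n) 1) {v} = hits (replicate n 1) {v - 1} + hits (replicate n 1) {v + 1}"
    for v by (simp add: hits_Cons)
  show ?case
  proof (cases p)
    case 0
    have "{y \<in> sign_vectors (length (replicate n (1::int))). dot (replicate n 1) y \<in> {- int n - 2}} = {}"
      using dot_ones_form[of _ n] by fastforce
    then have "hits (replicate n 1) {- int n - 2} = 0" unfolding hits_def by (simp only: card.empty)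
    moreover have "hits (replicate n 1) {- int n} = 1" using Suc.IH[of 0] by simp
    ultimately show ?thesis using step[of "- int (Suc n)"] 0 by (simp add: algebra_simps)
  next
    case (Suc q)
    have "hits (replicate (Suc n) 1) {2 * int p - int (Suc n)} =
        hits (replicate n 1) {2 * int q - int n} + hits (replicate n 1) {2 * int (Suc q) - int n}"
      using step[of "2 * int p - int (Suc n)"] Suc by (simp add: algebra_simps)
    also have "\<dots> = (n choose q) + (n choose Suc q)" using Suc.IH[of q] Suc.IH[of "Suc q"] by simp
    finally show ?thesis using Suc by simp
  qed
qed

(* Solutions for 1^(2t): exactly t entries are +1. *)
lemma card_perpB_ones: "card (perpB (replicate (2 * t) 1)) = 2 * t choose t"
  using hits_ones[of "2 * t" t] by (simp add: card_perpB)

(* Solutions for (2, 1^(2t+2)): the ones must sum to -2 or to 2. *)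
lemma card_perpB_two_ones:
  "card (perpB (2 # replicate (2 * t + 2) 1)) = (2 * t + 2 choose t) + (2 * t + 2 choose (t + 2))"
proof -
  let ?n = "2 * t + 2"
  have "card (perpB (2 # replicate ?n 1)) = hits (replicate ?n 1) {-2} + hits (replicate ?n 1) {2}"
    by (simp add: card_perpB hits_Cons)
  also have "\<dots> = hits (replicate ?n 1) {2 * int t - int ?n} + hits (replicate ?n 1) {2 * int (t + 2) - int ?n}"
    by simp
  also have "\<dots> = (?n choose t) + (?n choose (t + 2))" by (simp only: hits_ones)
  finally show ?thesis .
qed

(* A partition of odd length with all parts equal to c has no solutions, since
   c * (2p - k) = 0 is impossible for odd k. *)
lemma perpB_equal_parts_odd:
  assumes "odd k" "length l = k" "all_parts_equal l" "is_partition l"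
  shows "perpB l = {}"
proof (intro equals0I)
  define c where "c = hd l"
  have "l \<noteq> []" using assms(1,2) by auto
  then have l: "l = replicate k c" and "1 \<le> c"
    using assms(2-4) by (auto simp: all_parts_equal_def is_partition_def c_def intro: replicate_eqI)
  fix y assume "y \<in> perpB l"
  then have y: "y \<in> sign_vectors k" "(\<Sum>i<length l. int (l ! i) * y ! i) = 0"
    using assms(2) by (auto simp: perpB_def sign_vectors_def)
  then have "dot (map int l) y = 0"
    using sum_nth_eq_dot[of y l] assms(2) by (simp add: sign_vectors_def)
  then have zero: "dot (replicate k (int c)) y = 0" by (simp add: l map_replicate)
  obtain p where "dot (replicate k 1) y = 2 * int p - int k"
    using dot_ones_form[OF y(1)] by blast
  then have "int c * (2 * int p - int k) = 0" using zero dot_replicate[of k "int c" y] by simp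
  then have "2 * int p = int k" using \<open>1 \<le> c\<close> by simp
  then show False using assms(1) by presburger
qed

(* The bound for even length 2t + 2 lies strictly below the central binomial coefficient:
   by Pascal's rule (2t+2 choose t+1) = (2t choose t-1) + 2 (2t choose t) + (2t choose t+1),
   while the window sum has (2t choose t+2) < (2t choose t) in place of one copy. *)
lemma central_sum_4_even_lt: "central_sum (2 * t) 4 < (2 * t + 2) choose (t + 1)"
proof (cases t)
  case 0
  then show ?thesis by (simp add: central_sum_0)
next
  case (Suc u)
  have "2 * t choose (t + 2) < 2 * t choose t"
  proof (cases "t + 2 \<le> 2 * t")
    case True
    then show ?thesis by (intro binomial_strict_antimono) auto
  next
    case False
    then show ?thesis by (simp add: binomial_eq_0)
  qed
  moreover have "(2 * t + 2) choose (t + 1) = (2 * t + 1 choose t) + (2 * t + 1 choose (t + 1))"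
    using binomial_Suc_Suc[of "2 * t + 1" t] by (simp del: binomial_Suc_Suc)
  moreover have "2 * t + 1 choose t = (2 * t choose (t - 1)) + (2 * t choose t)"
    using binomial_Suc_Suc[of "2 * t" "t - 1"] Suc by (simp del: binomial_Suc_Suc)
  moreover have "2 * t + 1 choose (t + 1) = (2 * t choose t) + (2 * t choose (t + 1))"
    using binomial_Suc_Suc[of "2 * t" t] by (simp del: binomial_Suc_Suc)
  ultimately show ?thesis using central_sum_4_explicit[of t "2 * t"] Suc by simp
qed

(* For odd length 2t + 3 the bound equals the count for (2, 1^(2t+2)), by Pascal's rule. *)
lemma central_sum_4_odd:
  assumes "1 \<le> t"
  shows "central_sum (2 * t + 1) 4 = (2 * t + 2 choose t) + (2 * t + 2 choose (t + 2))"
proof -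
  have "2 * t + 2 choose t = (2 * t + 1 choose (t - 1)) + (2 * t + 1 choose t)"
    using binomial_Suc_Suc[of "2 * t + 1" "t - 1"] assms by (simp del: binomial_Suc_Suc)
  moreover have "2 * t + 2 choose (t + 2) = (2 * t + 1 choose (t + 1)) + (2 * t + 1 choose (t + 2))"
    using binomial_Suc_Suc[of "2 * t + 1" "t + 1"] by (simp del: binomial_Suc_Suc)
  ultimately show ?thesis using central_sum_4_explicit[OF assms, of "2 * t + 1"] by simp
qed

theorem mainTheorem6:
  shows "(\<forall>k l. 2 \<le> k \<and> is_partition l \<and> length l = k \<and> \<not> all_parts_equal l
            \<longrightarrow> card (perpB l) \<le> top4_binom_sum k)
       \<and> (\<forall>k \<mu>. 2 \<le> k \<and> even k \<and> is_partition \<mu> \<and> length \<mu> = k \<and> \<not> all_parts_equal \<mu>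
            \<longrightarrow> card (perpB \<mu>) < card (perpB (replicate k 1)))
       \<and> (\<forall>k \<mu>. 5 \<le> k \<and> odd k \<and> is_partition \<mu> \<and> length \<mu> = k
            \<longrightarrow> card (perpB \<mu>) \<le> card (perpB (2 # replicate (k - 1) 1)))"
proof (intro conjI allI impI)
  fix k l assume l: "2 \<le> k \<and> is_partition l \<and> length l = k \<and> \<not> all_parts_equal l"
  then have "card (perpB l) \<le> central_sum (k - 2) 4" using perpB_le_central_sum by blast
  also have "\<dots> \<le> top4_binom_sum (k - 2 + 2)" by (rule central_sum_4_le_top4)
  also have "k - 2 + 2 = k" using l by arith
  finally show "card (perpB l) \<le> top4_binom_sum k" .
next
  fix k \<mu> assume \<mu>: "2 \<le> k \<and> even k \<and> is_partition \<mu> \<and> length \<mu> = k \<and> \<not> all_parts_equal \<mu>"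
  then have "2 \<le> k" "even k" by auto
  then have "k = 2 * (k div 2 - 1) + 2" by presburger
  then obtain t where k: "k = 2 * t + 2" by blast
  have "card (perpB \<mu>) \<le> central_sum (2 * t) 4" using perpB_le_central_sum[of \<mu> k] \<mu> k by simp
  also have "\<dots> < card (perpB (replicate k 1))"
    using central_sum_4_even_lt[of t] card_perpB_ones[of "t + 1"] k by simp
  finally show "card (perpB \<mu>) < card (perpB (replicate k 1))" .
next
  fix k \<mu> assume \<mu>: "5 \<le> k \<and> odd k \<and> is_partition \<mu> \<and> length \<mu> = k"
  then have "5 \<le> k" "odd k" by auto
  then have "k = 2 * (k div 2 - 1) + 3 \<and> 1 \<le> k div 2 - 1" by presburger
  then obtain t where k: "k = 2 * t + 3" "1 \<le> t" by blast
  show "card (perpB \<mu>) \<le> card (perpB (2 # replicate (k - 1) 1))"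
  proof (cases "all_parts_equal \<mu>")
    case True
    then have "perpB \<mu> = {}" using perpB_equal_parts_odd \<mu> by blast
    then show ?thesis by simp
  next
    case False
    then have "card (perpB \<mu>) \<le> central_sum (2 * t + 1) 4"
      using perpB_le_central_sum[of \<mu> k] \<mu> k by simp
    then show ?thesis using central_sum_4_odd[OF k(2)] card_perpB_two_ones[of t] k by simp
  qed
qed

end
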